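(* Let $b\in\overline{\mathbb{Q}}\setminus\{0,1\}$ with a fixed logarithm $\ln b$. If there is a ladder to $\xi\in\mathbb{C}$ (with respect to $b$), then there is a ladder $a_1,\dots,a_m$ to $\xi$ (obtainable as a subsequence of the given one) such that $1,a_1,\dots,a_m$ are linearly independent over $\mathbb{Q}$.
   Context: $b^x:=e^{x\ln b}$ for the fixed nonzero value $\ln b$. $\overline{F}$ denotes the algebraic closure in $\mathbb{C}$ of a field $F$; $\overline{\mathbb{Q}}$ is the field of algebraic numbers. Ladder: for $a_1,\dots,a_m\in\mathbb{C}$ put $F_0:=\mathbb{Q}$ and $F_k:=\mathbb{Q}(a_1,\dots,a_k,b^{a_1},\dots,b^{a_k})$. The sequence is a ladder if for every $1\le k\le m$, $a_k\in\overline{F_{k-1}}$ or $b^{a_k}\in\overline{F_{k-1}}$; it is a ladder to $\xi$ if $\xi\in\overline{F_m}$. A ladder with $1,a_1,\dots,a_m$ linearly independent over $\mathbb{Q}$ is called reduced. *)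

theory Defs
  imports Complex_Main "HOL-Computational_Algebra.Polynomial" "HOL-Library.Sublist"
begin

text \<open>b^x := exp (x * ln b), for the fixed value lnb of the logarithm of b.\<close>
definition bpow :: "complex \<Rightarrow> complex \<Rightarrow> complex" where
  "bpow lnb x = exp (x * lnb)"

definition is_subfield :: "complex set \<Rightarrow> bool" where
  "is_subfield K \<longleftrightarrow> 0 \<in> K \<and> 1 \<in> K \<and>
     (\<forall>x\<in>K. \<forall>y\<in>K. x + y \<in> K \<and> x - y \<in> K \<and> x * y \<in> K) \<and>
     (\<forall>x\<in>K. x \<noteq> 0 \<longrightarrow> inverse x \<in> K)"

definition field_gen :: "complex set \<Rightarrow> complex set" where
  "field_gen S = \<Inter> {K. is_subfield K \<and> S \<subseteq> K}"

definition alg_closure :: "complex set \<Rightarrow> complex set" where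
  "alg_closure F = {z. \<exists>p::complex poly. p \<noteq> 0 \<and> (\<forall>i. coeff p i \<in> F) \<and> poly p z = 0}"

text \<open>F_k = Q(a_1,...,a_k, b^a_1,...,b^a_k) for the list as = [a_1,...,a_m] (0-indexed).\<close>
definition ladder_field :: "complex \<Rightarrow> complex list \<Rightarrow> nat \<Rightarrow> complex set" where
  "ladder_field lnb as k =
     field_gen ({as ! i | i. i < k} \<union> {bpow lnb (as ! i) | i. i < k})"

definition is_ladder :: "complex \<Rightarrow> complex list \<Rightarrow> bool" where
  "is_ladder lnb as \<longleftrightarrow>
     (\<forall>k < length as. as ! k \<in> alg_closure (ladder_field lnb as k)
                    \<or> bpow lnb (as ! k) \<in> alg_closure (ladder_field lnb as k))"

definition ladder_to :: "complex \<Rightarrow> complex list \<Rightarrow> complex \<Rightarrow> bool" where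
  "ladder_to lnb as \<xi> \<longleftrightarrow> is_ladder lnb as \<and> \<xi> \<in> alg_closure (ladder_field lnb as (length as))"

definition one_lin_indep_Q :: "complex list \<Rightarrow> bool" where
  "one_lin_indep_Q as \<longleftrightarrow>
     (\<forall>(c0::rat) (c::nat \<Rightarrow> rat).
        of_rat c0 + (\<Sum>i<length as. of_rat (c i) * as ! i) = (0::complex)
        \<longrightarrow> c0 = 0 \<and> (\<forall>i<length as. c i = 0))"

end

theory Submission
  imports Defs "HOL-Algebra.Algebraic_Closure_Type"
begin

text \<open>If \<open>1, a_1, ..., a_m\<close> are linearly dependent over \<open>\<rat>\<close>, some \<open>a_k\<close> is a rational
  affine combination of \<open>a_1, ..., a_(k-1)\<close>. Then \<open>a_k \<in> F_(k-1)\<close>, and \<open>b^a_k\<close> is a product of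
  rational powers of \<open>b\<close> and of the \<open>b^a_i\<close>, \<open>i < k\<close>, hence algebraic over \<open>F_(k-1)\<close>.
  Since algebraic closure is transitive, deleting \<open>a_k\<close> leaves the algebraic closures of all
  later fields of the ladder unchanged, so the shorter list is still a ladder to \<open>\<xi>\<close>;
  induction on the length finishes the proof.\<close>

subsection \<open>The complex numbers as a field in the sense of HOL-Algebra\<close>

abbreviation complex_ring :: "complex ring" where
  "complex_ring \<equiv> ring_of_type_algebra"

lemma field_complex_ring: "field complex_ring"
  by rule

interpretation CR: domain complex_ring
  using field_complex_ring field.axioms(1) by blast

lemma complex_ring_simps [simp]:
  "carrier complex_ring = UNIV" "x \<otimes>\<^bsub>complex_ring\<^esub> y = x * y"
  "x \<oplus>\<^bsub>complex_ring\<^esub> y = x + y" "\<zero>\<^bsub>complex_ring\<^esub> = 0" "\<one>\<^bsub>complex_ring\<^esub> = 1"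
  by (auto simp: ring_of_type_algebra_def)

lemma complex_ring_a_inv [simp]: "\<ominus>\<^bsub>complex_ring\<^esub> x = - x"
  by (rule CR.minus_equality) auto

lemma complex_ring_pow [simp]: "x [^]\<^bsub>complex_ring\<^esub> (n::nat) = x ^ n"
  by (induction n) (auto simp: ring_of_type_algebra_def)

lemma complex_ring_m_inv [simp]: "x \<noteq> 0 \<Longrightarrow> inv\<^bsub>complex_ring\<^esub> x = inverse x"
  by (rule CR.inv_unique'[symmetric]) auto

lemma subfield_complex_ring_iff: "subfield K complex_ring \<longleftrightarrow> is_subfield K"
proof
  assume K: "subfield K complex_ring"
  have "x - y \<in> K" if "x \<in> K" "y \<in> K" for x y
    using subringE(5,7)[OF subfieldE(1)[OF K]] that
    by (metis complex_ring_a_inv complex_ring_simps(3) diff_conv_add_uminus)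
  then show "is_subfield K"
    using subringE(2,3,6,7)[OF subfieldE(1)[OF K]] CR.subfield_m_inv(1)[OF K]
    unfolding is_subfield_def by auto
next
  assume K: "is_subfield K"
  show "subfield K complex_ring"
  proof (rule field.subfieldI'[OF field_complex_ring CR.subringI])
    show "\<ominus>\<^bsub>complex_ring\<^esub> x \<in> K" if "x \<in> K" for x
      using K that unfolding is_subfield_def by (metis complex_ring_a_inv diff_0)
  qed (use K in \<open>auto simp: is_subfield_def\<close>)
qed

text \<open>HOL-Algebra polynomials are coefficient lists with the leading coefficient first.\<close>

lemma CR_eval_eq_poly: "CR.eval p x = poly (Poly (rev p)) x"
  by (induction p) (auto simp: Poly_append poly_monom algebra_simps)

lemma mem_alg_closure_iff_algebraic_over:
  assumes "subring K complex_ring"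
  shows "z \<in> alg_closure K \<longleftrightarrow> (CR.algebraic over K) z"
proof
  assume "z \<in> alg_closure K"
  then obtain p where p: "p \<noteq> 0" "\<forall>i. Polynomial.coeff p i \<in> K" "poly p z = 0"
    unfolding alg_closure_def by blast
  have "set (rev (coeffs p)) \<subseteq> K"
    using p(2) by (auto simp: coeffs_def)
  moreover have "hd (rev (coeffs p)) \<noteq> 0"
    using p(1) by (simp add: hd_rev last_coeffs_eq_coeff_degree)
  ultimately have "rev (coeffs p) \<in> carrier (K[X]\<^bsub>complex_ring\<^esub>)"
    by (simp add: univ_poly_def polynomial_def)
  moreover have "CR.eval (rev (coeffs p)) z = 0"
    using p(3) by (simp add: CR_eval_eq_poly)
  ultimately show "(CR.algebraic over K) z"
    using CR.algebraicI[of "rev (coeffs p)" K z] p(1) by simp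
next
  assume "(CR.algebraic over K) z"
  then obtain l where l: "l \<in> carrier (K[X]\<^bsub>complex_ring\<^esub>)" "l \<noteq> []" "CR.eval l z = 0"
    using CR.algebraicE[OF assms] by auto
  have lK: "set l \<subseteq> K" and hd: "hd l \<noteq> 0"
    using l(1,2) by (auto simp: univ_poly_def polynomial_def)
  have "Poly (rev l) \<noteq> 0"
  proof
    assume "Poly (rev l) = 0"
    then obtain n where "rev l = replicate n 0"
      by (auto simp: Poly_eq_0)
    then have "last (rev l) = 0"
      using l(2) by (cases n) auto
    then have "hd l = 0"
      using l(2) by (simp add: last_rev)
    with hd show False ..
  qed
  moreover have "\<forall>i. Polynomial.coeff (Poly (rev l)) i \<in> K"
    using lK subringE(2)[OF assms] by (auto simp: nth_default_def rev_nth intro!: subsetD[OF lK])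
  moreover have "poly (Poly (rev l)) z = 0"
    using l(3) by (simp add: CR_eval_eq_poly)
  ultimately show "z \<in> alg_closure K"
    unfolding alg_closure_def by blast
qed

subsection \<open>Subfields and their algebraic closures\<close>

context
  fixes K :: "complex set"
  assumes K: "is_subfield K"
begin

lemma is_subfield_zero: "0 \<in> K" and is_subfield_one: "1 \<in> K"
  using K unfolding is_subfield_def by auto

lemma is_subfield_add: "x \<in> K \<Longrightarrow> y \<in> K \<Longrightarrow> x + y \<in> K"
  and is_subfield_diff: "x \<in> K \<Longrightarrow> y \<in> K \<Longrightarrow> x - y \<in> K"
  and is_subfield_mult: "x \<in> K \<Longrightarrow> y \<in> K \<Longrightarrow> x * y \<in> K"
  using K unfolding is_subfield_def by auto

lemma is_subfield_uminus: "x \<in> K \<Longrightarrow> - x \<in> K"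
  using is_subfield_diff[OF is_subfield_zero] by (metis diff_0)

lemma is_subfield_inverse: "x \<in> K \<Longrightarrow> inverse x \<in> K"
  using K unfolding is_subfield_def by (cases "x = 0") auto

lemma is_subfield_power: "x \<in> K \<Longrightarrow> x ^ n \<in> K"
  by (induction n) (auto intro: is_subfield_mult is_subfield_one)

lemma is_subfield_power_int: "x \<in> K \<Longrightarrow> x powi n \<in> K"
  by (simp add: power_int_def is_subfield_power is_subfield_inverse)

lemma is_subfield_sum: "(\<And>i. i \<in> I \<Longrightarrow> f i \<in> K) \<Longrightarrow> sum f I \<in> K"
  by (induction I rule: infinite_finite_induct) (auto intro: is_subfield_add is_subfield_zero)

lemma is_subfield_prod: "(\<And>i. i \<in> I \<Longrightarrow> f i \<in> K) \<Longrightarrow> prod f I \<in> K"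
  by (induction I rule: infinite_finite_induct) (auto intro: is_subfield_mult is_subfield_one)

lemma is_subfield_of_nat: "of_nat n \<in> K"
  by (induction n) (auto intro: is_subfield_add is_subfield_zero is_subfield_one)

lemma is_subfield_of_int: "of_int n \<in> K"
proof -
  have "of_int n = (of_nat (nat n) - of_nat (nat (- n)) :: complex)"
    by (cases "n \<ge> 0") auto
  then show ?thesis
    using is_subfield_diff is_subfield_of_nat by simp
qed

lemma is_subfield_of_rat: "of_rat r \<in> K"
proof -
  obtain a b where "quotient_of r = (a, b)"
    by (cases "quotient_of r")
  then have "r = of_int a / of_int b"
    by (rule quotient_of_div)
  then have "of_rat r = (of_int a / of_int b :: complex)"
    by (simp add: of_rat_divide)
  then show ?thesis
    using is_subfield_mult is_subfield_inverse is_subfield_of_int by (simp add: divide_inverse)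
qed

end

lemma subset_alg_closure: "is_subfield F \<Longrightarrow> F \<subseteq> alg_closure F"
proof
  fix x assume F: "is_subfield F" and "x \<in> F"
  have "\<forall>i. Polynomial.coeff [:-x, 1:] i \<in> F"
  proof
    fix i show "Polynomial.coeff [:-x, 1:] i \<in> F"
      using is_subfield_uminus[OF F \<open>x \<in> F\<close>] is_subfield_one[OF F] is_subfield_zero[OF F]
      by (cases i; cases "i - 1") (auto simp: coeff_pCons)
  qed
  then show "x \<in> alg_closure F"
    unfolding alg_closure_def by (intro CollectI exI[of _ "[:-x, 1:]"]) simp
qed

lemma alg_closure_mono: "F \<subseteq> G \<Longrightarrow> alg_closure F \<subseteq> alg_closure G"
  unfolding alg_closure_def by blast

lemma alg_closure_eq_algebraics:
  assumes "is_subfield K"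
  shows "alg_closure K = {x \<in> carrier complex_ring. (CR.algebraic over K) x}"
  using mem_alg_closure_iff_algebraic_over[OF subfieldE(1)] assms
  by (auto simp: subfield_complex_ring_iff)

lemma is_subfield_alg_closure: "is_subfield K \<Longrightarrow> is_subfield (alg_closure K)"
  using field.subfield_of_algebraics[OF field_complex_ring]
  by (simp add: alg_closure_eq_algebraics subfield_complex_ring_iff[symmetric])

lemma algebraic_mem_alg_closure:
  assumes F: "is_subfield F" and "algebraic x"
  shows "x \<in> alg_closure F"
proof -
  obtain p where p: "\<forall>i. Polynomial.coeff p i \<in> \<int>" "p \<noteq> 0" "poly p x = 0"
    using \<open>algebraic x\<close> unfolding algebraic_def by blast
  then have "\<forall>i. Polynomial.coeff p i \<in> F"
    using is_subfield_of_int[OF F] by (metis Ints_cases)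
  with p show ?thesis
    unfolding alg_closure_def by blast
qed

text \<open>An element algebraic over \<open>L\<close> is algebraic over the finite extension of \<open>K\<close> by the
  coefficients of its polynomial, and that extension has finite degree over \<open>K\<close>.\<close>

lemma alg_closure_trans:
  assumes K: "is_subfield K" and LK: "L \<subseteq> alg_closure K"
  shows "alg_closure L \<subseteq> alg_closure K"
proof
  fix z assume "z \<in> alg_closure L"
  then obtain p where p: "p \<noteq> 0" "range (Polynomial.coeff p) \<subseteq> L" "poly p z = 0"
    unfolding alg_closure_def by blast
  have sK: "subfield K complex_ring"
    using K subfield_complex_ring_iff by blast
  have alg: "(CR.algebraic over K) c" if "c \<in> set (coeffs p)" for c
    using that p(2) LK mem_alg_closure_iff_algebraic_over[OF subfieldE(1)[OF sK]]
    by (auto simp: range_coeff)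
  define F where "F = CR.finite_extension K (coeffs p)"
  have sF: "subfield F complex_ring"
    unfolding F_def using CR.finite_extension_is_subfield[OF sK _ alg] by simp
  have dim_F: "CR.finite_dimension K F"
    unfolding F_def using CR.finite_extension_finite_dimension(1)[OF sK _ alg] by simp
  have "range (Polynomial.coeff p) \<subseteq> F"
    using CR.finite_extension_mem[OF subfieldE(1)[OF sK]] subringE(2)[OF subfieldE(1)[OF sF]]
    by (auto simp: range_coeff F_def)
  then have "(CR.algebraic over F) z"
    using p mem_alg_closure_iff_algebraic_over[OF subfieldE(1)[OF sF]]
    unfolding alg_closure_def by blast
  then have "CR.finite_dimension F (CR.simple_extension F z)"
    using CR.finite_dimension_simple_extension[OF sF] by simp
  then have "CR.finite_dimension K (CR.simple_extension F z)"
    using CR.telescopic_base_dim(1)[OF sK sF dim_F] by blast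
  then have "(CR.algebraic over K) z"
    using CR.finite_dimension_imp_algebraic[OF sK CR.simple_extension_is_subring]
      CR.simple_extension_mem subfieldE(1)[OF sF] by simp
  then show "z \<in> alg_closure K"
    using mem_alg_closure_iff_algebraic_over[OF subfieldE(1)[OF sK]] by blast
qed

lemma alg_closure_idem: "is_subfield K \<Longrightarrow> alg_closure (alg_closure K) = alg_closure K"
  using alg_closure_trans subset_alg_closure is_subfield_alg_closure by blast

lemma alg_closure_root:
  assumes F: "is_subfield F" and "q > 0" and "y ^ q \<in> alg_closure F"
  shows "y \<in> alg_closure F"
proof -
  define p where "p = Polynomial.monom 1 q - [:y ^ q:]"
  have A: "is_subfield (alg_closure F)"
    using F by (rule is_subfield_alg_closure)
  have "Polynomial.coeff p i \<in> alg_closure F" for i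
    using is_subfield_uminus[OF A \<open>y ^ q \<in> alg_closure F\<close>] is_subfield_one[OF A]
      is_subfield_zero[OF A] \<open>q > 0\<close>
    by (cases i) (auto simp: p_def coeff_monom coeff_pCons split: nat.splits)
  moreover have "Polynomial.coeff p q = 1"
    using \<open>q > 0\<close> by (cases q) (simp_all add: p_def coeff_monom coeff_pCons)
  then have "p \<noteq> 0"
    by auto
  moreover have "poly p y = 0"
    by (simp add: p_def poly_monom)
  ultimately have "y \<in> alg_closure (alg_closure F)"
    unfolding alg_closure_def by blast
  then show ?thesis
    using alg_closure_idem[OF F] by simp
qed

lemma exp_of_rat_mult_mem_alg_closure:
  assumes F: "is_subfield F" and x: "exp x \<in> alg_closure F"
  shows "exp (of_rat r * x) \<in> alg_closure F"
proof -
  obtain a b where ab: "quotient_of r = (a, b)"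
    by (cases "quotient_of r")
  have "b > 0"
    using ab by (rule quotient_of_denom_pos)
  have "exp (of_rat r * x) ^ nat b = exp (of_nat (nat b) * (of_rat r * x))"
    by (simp add: exp_of_nat_mult)
  also have "\<dots> = exp x powi a"
    using \<open>b > 0\<close> quotient_of_div[OF ab] by (simp add: exp_power_int of_rat_divide)
  finally have "exp (of_rat r * x) ^ nat b \<in> alg_closure F"
    using is_subfield_power_int[OF is_subfield_alg_closure[OF F] x] by simp
  moreover have "nat b > 0"
    using \<open>b > 0\<close> by simp
  ultimately show ?thesis
    using alg_closure_root[OF F] by blast
qed

lemma exp_rat_combination_mem_alg_closure:
  assumes F: "is_subfield F" and c: "exp c \<in> alg_closure F"
    and x: "\<And>i. i \<in> I \<Longrightarrow> exp (x i) \<in> alg_closure F" and "finite I"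
  shows "exp (of_rat r0 * c + (\<Sum>i\<in>I. of_rat (r i) * x i)) \<in> alg_closure F"
proof -
  have A: "is_subfield (alg_closure F)"
    using F by (rule is_subfield_alg_closure)
  have "exp (\<Sum>i\<in>I. of_rat (r i) * x i) = (\<Prod>i\<in>I. exp (of_rat (r i) * x i))"
    using \<open>finite I\<close> by (rule exp_sum)
  also have "\<dots> \<in> alg_closure F"
    by (rule is_subfield_prod[OF A exp_of_rat_mult_mem_alg_closure[OF F x]])
  finally show ?thesis
    unfolding exp_add by (rule is_subfield_mult[OF A exp_of_rat_mult_mem_alg_closure[OF F c]])
qed

subsection \<open>Ladders\<close>

lemma is_subfield_field_gen: "is_subfield (field_gen S)"
  unfolding field_gen_def is_subfield_def by auto

lemma subset_field_gen: "S \<subseteq> field_gen S"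
  unfolding field_gen_def by auto

lemma field_gen_least: "is_subfield K \<Longrightarrow> S \<subseteq> K \<Longrightarrow> field_gen S \<subseteq> K"
  unfolding field_gen_def by auto

lemma field_gen_mono: "S \<subseteq> T \<Longrightarrow> field_gen S \<subseteq> field_gen T"
  unfolding field_gen_def by auto

lemma alg_closure_field_gen_Un_absorb:
  assumes "S \<subseteq> alg_closure (field_gen T)"
  shows "alg_closure (field_gen (S \<union> T)) = alg_closure (field_gen T)"
proof
  have "T \<subseteq> alg_closure (field_gen T)"
    using subset_field_gen subset_alg_closure[OF is_subfield_field_gen] by blast
  then have "field_gen (S \<union> T) \<subseteq> alg_closure (field_gen T)"
    using field_gen_least[OF is_subfield_alg_closure[OF is_subfield_field_gen]] assms by blast
  then show "alg_closure (field_gen (S \<union> T)) \<subseteq> alg_closure (field_gen T)"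
    using alg_closure_trans[OF is_subfield_field_gen] by blast
qed (intro alg_closure_mono field_gen_mono Un_upper2)

definition ladder_gens :: "complex \<Rightarrow> complex set \<Rightarrow> complex set" where
  "ladder_gens lnb A = A \<union> bpow lnb ` A"

lemma ladder_gens_insert: "ladder_gens lnb (insert a A) = {a, bpow lnb a} \<union> ladder_gens lnb A"
  unfolding ladder_gens_def by auto

lemma ladder_gens_mono: "A \<subseteq> B \<Longrightarrow> ladder_gens lnb A \<subseteq> ladder_gens lnb B"
  unfolding ladder_gens_def by auto

text \<open>Beyond the length of the list, \<open>ladder_field\<close> involves the unspecified values
  of \<open>as ! i\<close>; hence the bound on \<open>k\<close>.\<close>

lemma ladder_field_eq:
  assumes "k \<le> length as"
  shows "ladder_field lnb as k = field_gen (ladder_gens lnb (set (take k as)))"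
proof -
  have "set (take k as) = {as ! i | i. i < k}"
    using assms by (auto simp: set_conv_nth min_def) (metis nth_take)
  then show ?thesis
    unfolding ladder_field_def ladder_gens_def by (simp add: image_Collect) (metis setcompr_eq_image)
qed

lemma alg_closure_ladder_field_delete:
  assumes k: "k < length as"
    and red: "as ! k \<in> alg_closure (ladder_field lnb as k)"
      "bpow lnb (as ! k) \<in> alg_closure (ladder_field lnb as k)"
    and j: "j < length as"
  shows "alg_closure (ladder_field lnb (take k as @ drop (Suc k) as) j)
       = alg_closure (ladder_field lnb as (if j < k then j else Suc j))"
proof (cases "j < k")
  case True
  then show ?thesis
    using k j by (simp add: ladder_field_eq min_def)
next
  case False
  define ds where "ds = take k as @ drop (Suc k) as"
  have take_ds: "take j ds = take k as @ take (j - k) (drop (Suc k) as)"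
    using False k by (simp add: ds_def min_def)
  have "take (Suc j) as = take (Suc k + (j - k)) as"
    using False by simp
  also have "\<dots> = take (Suc k) as @ take (j - k) (drop (Suc k) as)"
    by (rule take_add)
  finally have "set (take (Suc j) as) = insert (as ! k) (set (take j ds))"
    using take_ds k by (simp add: take_Suc_conv_app_nth)
  then have gens_Suc: "ladder_field lnb as (Suc j)
      = field_gen ({as ! k, bpow lnb (as ! k)} \<union> ladder_gens lnb (set (take j ds)))"
    using j by (simp add: ladder_field_eq ladder_gens_insert)
  have gens_ds: "ladder_field lnb ds j = field_gen (ladder_gens lnb (set (take j ds)))"
    using k j by (simp add: ladder_field_eq ds_def)
  have "set (take k as) \<subseteq> set (take j ds)"
    using take_ds by simp
  then have "alg_closure (ladder_field lnb as k) \<subseteq> alg_closure (ladder_field lnb ds j)"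
    using k gens_ds by (simp add: ladder_field_eq alg_closure_mono field_gen_mono ladder_gens_mono)
  with red have "{as ! k, bpow lnb (as ! k)} \<subseteq> alg_closure (ladder_field lnb ds j)"
    by blast
  then have "alg_closure (ladder_field lnb as (Suc j)) = alg_closure (ladder_field lnb ds j)"
    unfolding gens_Suc gens_ds by (rule alg_closure_field_gen_Un_absorb)
  then show ?thesis
    using False by (simp add: ds_def)
qed

lemma subseq_take_drop_Suc: "subseq (take k xs @ drop (Suc k) xs) xs"
proof (cases "k < length xs")
  case True
  have "subseq (take k xs @ drop (Suc k) xs) (take k xs @ xs ! k # drop (Suc k) xs)"
    by (simp add: subseq_append' list_emb_Cons)
  then show ?thesis
    by (simp only: id_take_nth_drop[OF True, symmetric])
qed simp

lemma ladder_to_delete: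
  assumes L: "ladder_to lnb as \<xi>" and k: "k < length as"
    and red: "as ! k \<in> alg_closure (ladder_field lnb as k)"
      "bpow lnb (as ! k) \<in> alg_closure (ladder_field lnb as k)"
  shows "ladder_to lnb (take k as @ drop (Suc k) as) \<xi>"
proof -
  define ds where "ds = take k as @ drop (Suc k) as"
  define up where "up j = (if j < k then j else Suc j)" for j
  have len_ds: "length ds = length as - 1"
    using k by (simp add: ds_def)
  have nth_ds: "ds ! j = as ! up j" if "j < length ds" for j
    using that k by (auto simp: ds_def up_def nth_append min_def)
  have field_ds: "alg_closure (ladder_field lnb ds j) = alg_closure (ladder_field lnb as (up j))"
    if "j \<le> length ds" for j
    using alg_closure_ladder_field_delete[OF k red] that k len_ds by (simp add: ds_def up_def)
  have "is_ladder lnb ds"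
    unfolding is_ladder_def
  proof (intro allI impI)
    fix j assume "j < length ds"
    moreover have "up j < length as"
      using \<open>j < length ds\<close> len_ds by (auto simp: up_def)
    ultimately show "ds ! j \<in> alg_closure (ladder_field lnb ds j)
        \<or> bpow lnb (ds ! j) \<in> alg_closure (ladder_field lnb ds j)"
      using L nth_ds field_ds unfolding ladder_to_def is_ladder_def by simp
  qed
  moreover have "up (length ds) = length as"
    using k len_ds by (auto simp: up_def)
  then have "\<xi> \<in> alg_closure (ladder_field lnb ds (length ds))"
    using L field_ds[of "length ds"] unfolding ladder_to_def by simp
  ultimately show ?thesis
    unfolding ladder_to_def ds_def by blast
qed

lemma rat_relation_imp_rat_combination:
  fixes a :: "nat \<Rightarrow> 'a::field_char_0"
  assumes "of_rat c0 + (\<Sum>i<n. of_rat (c i) * a i) = 0" and "c0 \<noteq> 0 \<or> (\<exists>i<n. c i \<noteq> 0)"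
  shows "\<exists>k<n. \<exists>d0 d. a k = of_rat d0 + (\<Sum>i<k. of_rat (d i) * a i)"
  using assms
proof (induction n)
  case (Suc n)
  show ?case
  proof (cases "c n = 0")
    case True
    with Suc.prems have "\<exists>k<n. \<exists>d0 d. a k = of_rat d0 + (\<Sum>i<k. of_rat (d i) * a i)"
      by (intro Suc.IH) (auto simp: less_Suc_eq)
    then show ?thesis
      using less_SucI by blast
  next
    case False
    define S where "S = (\<Sum>i<n. of_rat (c i) * a i)"
    have "of_rat c0 + S + of_rat (c n) * a n = 0"
      using Suc.prems(1) by (simp add: S_def add.assoc)
    then have "of_rat (c n) * a n = - of_rat c0 - S"
      by (simp add: eq_diff_eq add_eq_0_iff2 ac_simps)
    then have "a n = (- of_rat c0 - S) / of_rat (c n)"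
      using False by (simp add: eq_divide_eq mult.commute)
    also have "\<dots> = - of_rat c0 / of_rat (c n) - S / of_rat (c n)"
      by (rule diff_divide_distrib)
    also have "S / of_rat (c n) = - (\<Sum>i<n. of_rat (- c i / c n) * a i)"
      unfolding S_def sum_divide_distrib sum_negf[symmetric]
      by (simp add: of_rat_divide of_rat_minus)
    finally have "a n = of_rat (- c0 / c n) + (\<Sum>i<n. of_rat (- c i / c n) * a i)"
      by (simp add: of_rat_divide of_rat_minus)
    then have "\<exists>d0 d. a n = of_rat d0 + (\<Sum>i<n. of_rat (d i) * a i)"
      by (intro exI)
    then show ?thesis
      by blast
  qed
qed simp

lemma not_one_lin_indep_Q_imp_rat_combination:
  assumes "\<not> one_lin_indep_Q as"
  shows "\<exists>k<length as. \<exists>d0 d. as ! k = of_rat d0 + (\<Sum>i<k. of_rat (d i) * as ! i)"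
proof -
  obtain c0 c where "of_rat c0 + (\<Sum>i<length as. of_rat (c i) * as ! i) = (0::complex)"
    and "c0 \<noteq> 0 \<or> (\<exists>i<length as. c i \<noteq> 0)"
    using assms unfolding one_lin_indep_Q_def by blast
  then show ?thesis
    by (rule rat_relation_imp_rat_combination)
qed

lemma rat_combination_mem_alg_closure_ladder_field:
  assumes b: "algebraic (exp lnb)"
    and ak: "as ! k = of_rat d0 + (\<Sum>i<k. of_rat (d i) * as ! i)"
  shows "as ! k \<in> alg_closure (ladder_field lnb as k)"
    and "bpow lnb (as ! k) \<in> alg_closure (ladder_field lnb as k)"
proof -
  define F where "F = ladder_field lnb as k"
  have F: "is_subfield F"
    unfolding F_def ladder_field_def by (rule is_subfield_field_gen)
  have a: "as ! i \<in> F" and ba: "bpow lnb (as ! i) \<in> F" if "i < k" for i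
    using that subset_field_gen[of "{as ! i | i. i < k} \<union> {bpow lnb (as ! i) | i. i < k}"]
    unfolding F_def ladder_field_def by auto
  have "as ! k \<in> F"
    unfolding ak using F a
    by (intro is_subfield_add is_subfield_sum is_subfield_mult is_subfield_of_rat) auto
  then show "as ! k \<in> alg_closure (ladder_field lnb as k)"
    using subset_alg_closure[OF F] F_def by blast
  have "bpow lnb (as ! k) = exp (of_rat d0 * lnb + (\<Sum>i<k. of_rat (d i) * (as ! i * lnb)))"
    unfolding bpow_def ak by (simp add: distrib_right sum_distrib_right mult.assoc)
  also have "\<dots> \<in> alg_closure F"
    using F algebraic_mem_alg_closure[OF F b] ba subset_alg_closure[OF F]
    by (intro exp_rat_combination_mem_alg_closure) (auto simp: bpow_def)
  finally show "bpow lnb (as ! k) \<in> alg_closure (ladder_field lnb as k)"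
    unfolding F_def .
qed

lemma ladder_to_delete_dependent:
  assumes "algebraic (exp lnb)" and "ladder_to lnb as \<xi>" and "\<not> one_lin_indep_Q as"
  shows "\<exists>k<length as. ladder_to lnb (take k as @ drop (Suc k) as) \<xi>"
proof -
  obtain k d0 d where "k < length as" and ak: "as ! k = of_rat d0 + (\<Sum>i<k. of_rat (d i) * as ! i)"
    using not_one_lin_indep_Q_imp_rat_combination[OF assms(3)] by blast
  then show ?thesis
    using ladder_to_delete[OF assms(2)] rat_combination_mem_alg_closure_ladder_field[OF assms(1) ak]
    by blast
qed

theorem lemma11p3:
  fixes b lnb \<xi> :: complex and as :: "complex list"
  assumes "algebraic b" and "b \<noteq> 0" and "b \<noteq> 1" and "exp lnb = b"
    and "ladder_to lnb as \<xi>"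
  shows "\<exists>as'. subseq as' as \<and> ladder_to lnb as' \<xi> \<and> one_lin_indep_Q as'"
  using assms(5)
proof (induction "length as" arbitrary: as rule: less_induct)
  case less
  show ?case
  proof (cases "one_lin_indep_Q as")
    case False
    then obtain k where k: "k < length as" and L: "ladder_to lnb (take k as @ drop (Suc k) as) \<xi>"
      using ladder_to_delete_dependent assms(1,4) less.prems by blast
    moreover have "length (take k as @ drop (Suc k) as) < length as"
      using k by simp
    ultimately obtain as' where "subseq as' (take k as @ drop (Suc k) as)"
      and "ladder_to lnb as' \<xi>" and "one_lin_indep_Q as'"
      using less.hyps by blast
    moreover have "subseq (take k as @ drop (Suc k) as) as"
      by (rule subseq_take_drop_Suc)
    ultimately show ?thesis
      using subseq_order.order_trans by blast
  qed (use less.prems in blast)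
qed

end
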